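(* Work in discrete time, $t, \tau \in \{0,1,2,\dots\}$. Let $S(\tau,t)$, for integers $t \ge \tau \ge 0$, be a random process with non-negative real values and $S(t,t) = 0$ for all $t \ge 0$, and write $\mathsf{M}_S(-\theta,\tau,t) = \mathsf{E}[e^{-\theta S(\tau,t)}]$ for $\theta \ge 0$. Let $\varepsilon \in (0,1]$, $\rho \in (0,1/\varepsilon]$, and for each pair $t \ge \tau \ge 0$ let $\theta(\tau,t) > 0$ be an arbitrary (deterministic) parameter. Define $$\mathcal{S}^{\varepsilon}(\tau,t) = -\frac{1}{\theta(\tau,t)}\Bigl( \ln \mathsf{M}_S(-\theta(\tau,t),\tau,t) + \rho (t-\tau) - \ln(\rho\varepsilon)\Bigr).$$ Then for every $t \ge 0$, $$\mathsf{P}\bigl[S(\tau,t) \ge \mathcal{S}^{\varepsilon}(\tau,t) \text{ for all } \tau \in \{0,1,\dots,t\}\bigr] \ge 1-\varepsilon .$$ Consequently, if $A(t)$ and $D(t)$ are (cumulative arrival and departure) processes satisfying $D(t) \ge \inf_{\tau \in [0,t]}\{A(\tau) + S(\tau,t)\}$ for all $t \ge 0$, then $\mathsf{P}\bigl[D(t) \ge \inf_{\tau \in [0,t]}\{A(\tau) + \mathcal{S}^{\varepsilon}(\tau,t)\}\bigr] \ge 1-\varepsilon$ for all $t \ge 0$.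
   Context: $S(\tau,t)$ models the (time-variant, possibly non-stationary) service offered by a system in the interval $(\tau,t]$. $A(t)$ denotes the number of bits arriving in $(0,t]$ (non-negative, non-decreasing, $A(0)=0$) and $D(t)$ the cumulative departures. The function $\mathcal{S}^{\varepsilon}$ is called a non-stationary service curve. *)

theory Defs
  imports "HOL-Probability.Probability"
begin

definition mgf_neg :: "'a measure \<Rightarrow> (nat \<Rightarrow> nat \<Rightarrow> 'a \<Rightarrow> real) \<Rightarrow> real \<Rightarrow> nat \<Rightarrow> nat \<Rightarrow> real" where
  "mgf_neg M S \<theta> \<tau> t = prob_space.expectation M (\<lambda>\<omega>. exp (- \<theta> * S \<tau> t \<omega>))"

definition service_curve ::
  "'a measure \<Rightarrow> (nat \<Rightarrow> nat \<Rightarrow> 'a \<Rightarrow> real) \<Rightarrow> (nat \<Rightarrow> nat \<Rightarrow> real) \<Rightarrow> real \<Rightarrow> real \<Rightarrow> nat \<Rightarrow> nat \<Rightarrow> real" where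
  "service_curve M S \<theta> \<rho> \<epsilon> \<tau> t =
     - (1 / \<theta> \<tau> t) * (ln (mgf_neg M S (\<theta> \<tau> t) \<tau> t) + \<rho> * (real t - real \<tau>) - ln (\<rho> * \<epsilon>))"

end

theory Submission
  imports Defs
begin

text \<open>For each \<open>\<tau> < t\<close>, Chernoff's bound for the lower tail of \<open>S \<tau> t\<close>, taken at
  \<open>\<theta> \<tau> t\<close>, shows that \<open>S \<tau> t\<close> falls below the service curve with probability at most
  \<open>\<rho> * \<epsilon> * exp (- \<rho> * (t - \<tau>))\<close>; for \<open>\<tau> = t\<close> the curve is non-positive because
  \<open>S t t = 0\<close> and \<open>\<rho> * \<epsilon> \<le> 1\<close>. A union bound over \<open>\<tau> < t\<close> therefore costs at most
  \<open>\<rho> * \<epsilon> * (\<Sum>k\<ge>1. exp (- \<rho> * k)) \<le> \<rho> * \<epsilon> / \<rho> = \<epsilon>\<close>, since \<open>exp \<rho> \<ge> 1 + \<rho>\<close>.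
  The bound on the departures follows pointwise from monotonicity of the infimum.\<close>

lemma (in prob_space) integrable_exp_neg:
  fixes X :: "'a \<Rightarrow> real" and \<theta> :: real
  assumes "X \<in> borel_measurable M" "\<And>\<omega>. \<omega> \<in> space M \<Longrightarrow> X \<omega> \<ge> 0" "\<theta> \<ge> 0"
  shows "integrable M (\<lambda>\<omega>. exp (- \<theta> * X \<omega>))"
proof (rule integrable_const_bound[where B = 1])
  have "0 \<le> \<theta> * X \<omega>" if "\<omega> \<in> space M" for \<omega>
    using assms(2)[OF that] assms(3) by simp
  then show "AE \<omega> in M. norm (exp (- \<theta> * X \<omega>)) \<le> 1"
    by (intro AE_I2) simp
qed (use assms(1) in measurable)

lemma (in prob_space) expectation_exp_neg_pos:
  fixes X :: "'a \<Rightarrow> real" and \<theta> :: real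
  assumes "X \<in> borel_measurable M" "\<And>\<omega>. \<omega> \<in> space M \<Longrightarrow> X \<omega> \<ge> 0" "\<theta> \<ge> 0"
  shows "expectation (\<lambda>\<omega>. exp (- \<theta> * X \<omega>)) > 0"
proof -
  let ?f = "\<lambda>\<omega>. exp (- \<theta> * X \<omega>)"
  have "\<not> (AE \<omega> in M. ?f \<omega> = 0)"
    using AE_False by simp
  moreover have "integrable M ?f"
    using assms by (rule integrable_exp_neg)
  ultimately have "expectation ?f \<noteq> 0"
    using integral_nonneg_eq_0_iff_AE[of M ?f] by auto
  moreover have "expectation ?f \<ge> 0" by (simp add: integral_nonneg_AE)
  ultimately show ?thesis by linarith
qed

lemma (in prob_space) prob_less_le_expectation_exp_neg:
  fixes X :: "'a \<Rightarrow> real" and \<theta> :: real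
  assumes "X \<in> borel_measurable M" "\<And>\<omega>. \<omega> \<in> space M \<Longrightarrow> X \<omega> \<ge> 0" "\<theta> > 0"
  shows "prob {\<omega> \<in> space M. X \<omega> < c} \<le> expectation (\<lambda>\<omega>. exp (- \<theta> * X \<omega>)) / exp (- \<theta> * c)"
proof -
  let ?f = "\<lambda>\<omega>. exp (- \<theta> * X \<omega>)"
  have "{\<omega> \<in> space M. X \<omega> < c} \<subseteq> {\<omega> \<in> space M. ?f \<omega> \<ge> exp (- \<theta> * c)}"
    using assms(3) by auto
  then have "prob {\<omega> \<in> space M. X \<omega> < c} \<le> prob {\<omega> \<in> space M. ?f \<omega> \<ge> exp (- \<theta> * c)}"
    by (rule finite_measure_mono) (use assms(1) in measurable)
  also have "\<dots> \<le> expectation ?f / exp (- \<theta> * c)"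
    using assms by (intro integral_Markov_inequality_measure integrable_exp_neg) auto
  finally show ?thesis .
qed

lemma sum_exp_neg_power_le_inverse:
  fixes \<rho> :: real
  assumes "\<rho> > 0"
  shows "(\<Sum>\<tau><t. exp (- \<rho>) ^ (t - \<tau>)) \<le> 1 / \<rho>"
proof -
  let ?x = "exp (- \<rho>)"
  have x: "0 < ?x" "?x < 1" using assms by auto
  have "(\<Sum>\<tau><t. ?x ^ (t - \<tau>)) = (\<Sum>i<t. ?x ^ (t - (t - Suc i)))"
    by (rule sum.nat_diff_reindex[symmetric])
  also have "\<dots> = ?x * (\<Sum>i<t. ?x ^ i)"
    by (simp add: sum_distrib_left)
  also have "\<dots> = ?x * ((1 - ?x ^ t) / (1 - ?x))"
    using x by (simp add: sum_gp_strict)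
  also have "\<dots> \<le> ?x / (1 - ?x)"
    using x by (simp add: divide_right_mono mult_left_le)
  also have "\<dots> \<le> 1 / \<rho>"
  proof -
    have "1 + \<rho> \<le> exp \<rho>" by (rule exp_ge_add_one_self)
    then have "\<rho> * ?x \<le> 1 - ?x" using x by (simp add: exp_minus field_simps)
    then show ?thesis using x assms by (simp add: field_simps)
  qed
  finally show ?thesis .
qed

lemma service_curve_diag_nonpos:
  assumes "prob_space M" "\<And>\<omega>. \<omega> \<in> space M \<Longrightarrow> S t t \<omega> = 0"
    and "0 < \<rho> * \<epsilon>" "\<rho> * \<epsilon> \<le> 1" "\<theta> t t > 0"
  shows "service_curve M S \<theta> \<rho> \<epsilon> t t \<le> 0"
proof -
  interpret prob_space M by (rule assms(1))
  have "mgf_neg M S (\<theta> t t) t t = expectation (\<lambda>\<omega>. 1)"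
    unfolding mgf_neg_def by (rule Bochner_Integration.integral_cong) (auto simp: assms(2))
  then have "mgf_neg M S (\<theta> t t) t t = 1" by (simp add: prob_space)
  moreover have "ln (\<rho> * \<epsilon>) \<le> 0" using assms(3,4) by simp
  ultimately show ?thesis
    using assms(5) unfolding service_curve_def by (simp add: divide_nonpos_pos)
qed

lemma prob_service_curve_violated:
  assumes "prob_space M" "\<tau> < t"
    and "S \<tau> t \<in> borel_measurable M" "\<And>\<omega>. \<omega> \<in> space M \<Longrightarrow> S \<tau> t \<omega> \<ge> 0"
    and "0 < \<rho> * \<epsilon>" "\<theta> \<tau> t > 0"
  shows "prob_space.prob M {\<omega> \<in> space M. S \<tau> t \<omega> < service_curve M S \<theta> \<rho> \<epsilon> \<tau> t}
           \<le> \<rho> * \<epsilon> * exp (- \<rho>) ^ (t - \<tau>)"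
proof -
  interpret prob_space M by (rule assms(1))
  let ?m = "mgf_neg M S (\<theta> \<tau> t) \<tau> t" and ?c = "service_curve M S \<theta> \<rho> \<epsilon> \<tau> t"
  have m_pos: "?m > 0"
    unfolding mgf_neg_def using assms(3,4,6) by (intro expectation_exp_neg_pos) auto
  have "- \<theta> \<tau> t * ?c = ln ?m + \<rho> * real (t - \<tau>) - ln (\<rho> * \<epsilon>)"
    unfolding service_curve_def using assms(2,6) by (simp add: of_nat_diff)
  then have "exp (- \<theta> \<tau> t * ?c) = ?m * exp (\<rho> * real (t - \<tau>)) / (\<rho> * \<epsilon>)"
    using m_pos assms(5) by (simp add: exp_diff exp_add)
  then have "?m / exp (- \<theta> \<tau> t * ?c) = \<rho> * \<epsilon> * exp (- \<rho>) ^ (t - \<tau>)"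
    using m_pos assms(5)
    by (simp add: exp_minus field_simps exp_of_nat_mult[symmetric] mult.commute)
  moreover have "prob {\<omega> \<in> space M. S \<tau> t \<omega> < ?c} \<le> ?m / exp (- \<theta> \<tau> t * ?c)"
    unfolding mgf_neg_def using assms(3,4,6) by (rule prob_less_le_expectation_exp_neg)
  ultimately show ?thesis by simp
qed

lemma prob_service_curve_holds:
  assumes "prob_space M"
    and S_meas: "\<And>\<tau>. \<tau> \<le> t \<Longrightarrow> S \<tau> t \<in> borel_measurable M"
    and S_nonneg: "\<And>\<tau> \<omega>. \<tau> \<le> t \<Longrightarrow> \<omega> \<in> space M \<Longrightarrow> S \<tau> t \<omega> \<ge> 0"
    and S_diag: "\<And>\<omega>. \<omega> \<in> space M \<Longrightarrow> S t t \<omega> = 0"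
    and "0 < \<rho>" "0 < \<epsilon>" "\<rho> * \<epsilon> \<le> 1"
    and theta_pos: "\<And>\<tau>. \<tau> \<le> t \<Longrightarrow> \<theta> \<tau> t > 0"
  shows "prob_space.prob M {\<omega> \<in> space M. \<forall>\<tau>\<le>t. S \<tau> t \<omega> \<ge> service_curve M S \<theta> \<rho> \<epsilon> \<tau> t}
           \<ge> 1 - \<epsilon>"
proof -
  interpret prob_space M by (rule assms(1))
  let ?c = "service_curve M S \<theta> \<rho> \<epsilon>"
  define B where "B \<tau> = {\<omega> \<in> space M. S \<tau> t \<omega> < ?c \<tau> t}" for \<tau>
  have \<rho>\<epsilon>: "0 < \<rho> * \<epsilon>" using assms(5,6) by simp
  have c_diag: "?c t t \<le> 0"
    using assms(1) S_diag \<rho>\<epsilon> assms(7) theta_pos[OF order_refl] by (rule service_curve_diag_nonpos)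
  have B_sets: "B ` {..<t} \<subseteq> sets M"
    unfolding B_def using S_meas by (auto intro!: borel_measurable_le)
  have "S \<tau> t \<omega> \<ge> ?c \<tau> t \<longleftrightarrow> \<omega> \<notin> B \<tau>" if "\<tau> < t" "\<omega> \<in> space M" for \<tau> \<omega>
    using that by (simp add: B_def not_less)
  moreover have "S t t \<omega> \<ge> ?c t t" if "\<omega> \<in> space M" for \<omega>
    using c_diag S_diag[OF that] by simp
  ultimately have "{\<omega> \<in> space M. \<forall>\<tau>\<le>t. S \<tau> t \<omega> \<ge> ?c \<tau> t} = space M - (\<Union>\<tau><t. B \<tau>)"
    by (auto simp: le_less)
  moreover have "prob (\<Union>\<tau><t. B \<tau>) \<le> \<epsilon>"
  proof -
    have "prob (\<Union>\<tau><t. B \<tau>) \<le> (\<Sum>\<tau><t. prob (B \<tau>))"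
      by (rule finite_measure_subadditive_finite) (use B_sets in auto)
    also have "\<dots> \<le> (\<Sum>\<tau><t. \<rho> * \<epsilon> * exp (- \<rho>) ^ (t - \<tau>))"
      unfolding B_def using S_meas S_nonneg theta_pos \<rho>\<epsilon>
      by (intro sum_mono prob_service_curve_violated[OF assms(1)]) auto
    also have "\<dots> = \<rho> * \<epsilon> * (\<Sum>\<tau><t. exp (- \<rho>) ^ (t - \<tau>))"
      by (simp add: sum_distrib_left)
    also have "\<dots> \<le> \<rho> * \<epsilon> * (1 / \<rho>)"
      using sum_exp_neg_power_le_inverse[OF assms(5)] \<rho>\<epsilon> by (intro mult_left_mono) auto
    finally show ?thesis using assms(5) by simp
  qed
  moreover have "(\<Union>\<tau><t. B \<tau>) \<in> sets M" using B_sets by auto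
  ultimately show ?thesis using prob_compl by simp
qed

theorem mainTheorem3:
  fixes M :: "'a measure"
    and S :: "nat \<Rightarrow> nat \<Rightarrow> 'a \<Rightarrow> real"
    and \<theta> :: "nat \<Rightarrow> nat \<Rightarrow> real"
    and \<epsilon> \<rho> :: real
    and A D :: "nat \<Rightarrow> 'a \<Rightarrow> real"
  assumes P: "prob_space M"
    and S_meas: "\<And>\<tau> t. \<tau> \<le> t \<Longrightarrow> S \<tau> t \<in> borel_measurable M"
    and S_nonneg: "\<And>\<tau> t \<omega>. \<tau> \<le> t \<Longrightarrow> \<omega> \<in> space M \<Longrightarrow> S \<tau> t \<omega> \<ge> 0"
    and S_diag: "\<And>t \<omega>. \<omega> \<in> space M \<Longrightarrow> S t t \<omega> = 0"
    and eps: "0 < \<epsilon>" "\<epsilon> \<le> 1"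
    and rho: "0 < \<rho>" "\<rho> \<le> 1 / \<epsilon>"
    and theta_pos: "\<And>\<tau> t. \<tau> \<le> t \<Longrightarrow> \<theta> \<tau> t > 0"
  shows "(\<forall>t. prob_space.prob M
            {\<omega> \<in> space M. \<forall>\<tau>\<le>t. S \<tau> t \<omega> \<ge> service_curve M S \<theta> \<rho> \<epsilon> \<tau> t} \<ge> 1 - \<epsilon>)
       \<and> ((\<forall>t. A t \<in> borel_measurable M) \<and> (\<forall>t. D t \<in> borel_measurable M)
          \<and> (\<forall>t \<omega>. \<omega> \<in> space M \<longrightarrow> A t \<omega> \<ge> 0)
          \<and> (\<forall>s t \<omega>. \<omega> \<in> space M \<longrightarrow> s \<le> t \<longrightarrow> A s \<omega> \<le> A t \<omega>)
          \<and> (\<forall>\<omega>. \<omega> \<in> space M \<longrightarrow> A 0 \<omega> = 0)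
          \<and> (\<forall>t \<omega>. \<omega> \<in> space M \<longrightarrow> D t \<omega> \<ge> (INF \<tau>\<in>{..t}. A \<tau> \<omega> + S \<tau> t \<omega>))
          \<longrightarrow> (\<forall>t. prob_space.prob M
                {\<omega> \<in> space M. D t \<omega> \<ge> (INF \<tau>\<in>{..t}. A \<tau> \<omega> + service_curve M S \<theta> \<rho> \<epsilon> \<tau> t)}
                \<ge> 1 - \<epsilon>))"
proof -
  interpret prob_space M by (rule P)
  let ?c = "service_curve M S \<theta> \<rho> \<epsilon>"
  have \<rho>\<epsilon>: "\<rho> * \<epsilon> \<le> 1" using eps rho by (simp add: field_simps)
  have curve: "prob {\<omega> \<in> space M. \<forall>\<tau>\<le>t. S \<tau> t \<omega> \<ge> ?c \<tau> t} \<ge> 1 - \<epsilon>" for t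
    using P S_meas S_nonneg S_diag rho(1) eps(1) \<rho>\<epsilon> theta_pos by (rule prob_service_curve_holds)
  show ?thesis
  proof (intro conjI allI impI curve)
    fix t
    assume H: "(\<forall>t. A t \<in> borel_measurable M) \<and> (\<forall>t. D t \<in> borel_measurable M)
          \<and> (\<forall>t \<omega>. \<omega> \<in> space M \<longrightarrow> A t \<omega> \<ge> 0)
          \<and> (\<forall>s t \<omega>. \<omega> \<in> space M \<longrightarrow> s \<le> t \<longrightarrow> A s \<omega> \<le> A t \<omega>)
          \<and> (\<forall>\<omega>. \<omega> \<in> space M \<longrightarrow> A 0 \<omega> = 0)
          \<and> (\<forall>t \<omega>. \<omega> \<in> space M \<longrightarrow> D t \<omega> \<ge> (INF \<tau>\<in>{..t}. A \<tau> \<omega> + S \<tau> t \<omega>))"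
    then have A_meas: "\<And>s. A s \<in> borel_measurable M" and D_meas: "D t \<in> borel_measurable M"
      and D_ge: "\<And>\<omega>. \<omega> \<in> space M \<Longrightarrow> D t \<omega> \<ge> (INF \<tau>\<in>{..t}. A \<tau> \<omega> + S \<tau> t \<omega>)"
      by auto
    let ?E = "{\<omega> \<in> space M. \<forall>\<tau>\<le>t. S \<tau> t \<omega> \<ge> ?c \<tau> t}"
    let ?F = "{\<omega> \<in> space M. D t \<omega> \<ge> (INF \<tau>\<in>{..t}. A \<tau> \<omega> + ?c \<tau> t)}"
    have "(\<lambda>\<omega>. INF \<tau>\<in>{..t}. A \<tau> \<omega> + ?c \<tau> t) \<in> borel_measurable M"
      using A_meas by (intro borel_measurable_cINF_real) auto
    then have F_sets: "?F \<in> sets M" using D_meas by (rule borel_measurable_le)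
    have "?E \<subseteq> ?F"
    proof
      fix \<omega> assume \<omega>: "\<omega> \<in> ?E"
      then have "(INF \<tau>\<in>{..t}. A \<tau> \<omega> + ?c \<tau> t) \<le> (INF \<tau>\<in>{..t}. A \<tau> \<omega> + S \<tau> t \<omega>)"
        by (intro cINF_mono) (auto intro: add_left_mono)
      then show "\<omega> \<in> ?F" using \<omega> D_ge[of \<omega>] by auto
    qed
    then have "prob ?E \<le> prob ?F" using F_sets by (rule finite_measure_mono)
    then show "prob ?F \<ge> 1 - \<epsilon>" using curve[of t] by linarith
  qed
qed

end
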